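(* Let $\mathcal T$ and $\mathcal S$ be triangulated categories and let $T:\mathcal S\to\mathcal T$ be a triangle functor. Suppose $T$ has a left (respectively right) adjoint $S$. Then an object $Q$ of $\mathcal S$ is $T$-relative projective (respectively $T$-relative injective) if and only if $Q$ lies in $\mathrm{add}(\mathrm{im}(S))$.
   Context: An object $Q$ of $\mathcal S$ is $T$-relative projective if the natural transformation $\mathcal S(Q,-)\to\mathcal T(TQ,T-)$ induced by $T$ is injective, and $T$-relative injective if the natural transformation $\mathcal S(-,Q)\to\mathcal T(T-,TQ)$ induced by $T$ is injective. $\mathrm{add}(\mathrm{im}(S))$ is the full subcategory of direct summands of finite direct sums of objects $S(L)$, $L$ in $\mathcal T$. *)

theory Defs
  imports Main
begin

text \<open>Triangles are triples (u,v,w) with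
u : X -> Y, v : Y -> Z, w : Z -> Sigma X.\<close>

record ('o,'m) tricat =
  Obj :: "'o set"
  Arr :: "'m set"
  Dom :: "'m \<Rightarrow> 'o"
  Cod :: "'m \<Rightarrow> 'o"
  Cmp :: "'m \<Rightarrow> 'm \<Rightarrow> 'm"   (* Cmp g f = g o f *)
  Idn :: "'o \<Rightarrow> 'm"
  Zro :: "'o \<Rightarrow> 'o \<Rightarrow> 'm"
  Pls :: "'m \<Rightarrow> 'm \<Rightarrow> 'm"
  Ngt :: "'m \<Rightarrow> 'm"
  ShO :: "'o \<Rightarrow> 'o"
  ShA :: "'m \<Rightarrow> 'm"
  Dist :: "('m \<times> 'm \<times> 'm) set"

definition hom :: "('o,'m) tricat \<Rightarrow> 'o \<Rightarrow> 'o \<Rightarrow> 'm set" where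
  "hom C X Y = {f \<in> Arr C. Dom C f = X \<and> Cod C f = Y}"

definition category :: "('o,'m) tricat \<Rightarrow> bool" where
  "category C \<longleftrightarrow>
     (\<forall>f\<in>Arr C. Dom C f \<in> Obj C \<and> Cod C f \<in> Obj C) \<and>
     (\<forall>X\<in>Obj C. Idn C X \<in> hom C X X) \<and>
     (\<forall>X Y Z f g. f \<in> hom C X Y \<longrightarrow> g \<in> hom C Y Z \<longrightarrow> Cmp C g f \<in> hom C X Z) \<and>
     (\<forall>X Y Z W f g h. f \<in> hom C X Y \<longrightarrow> g \<in> hom C Y Z \<longrightarrow> h \<in> hom C Z W \<longrightarrow>
         Cmp C h (Cmp C g f) = Cmp C (Cmp C h g) f) \<and>
     (\<forall>X Y f. f \<in> hom C X Y \<longrightarrow> Cmp C f (Idn C X) = f \<and> Cmp C (Idn C Y) f = f)"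

definition preadditive :: "('o,'m) tricat \<Rightarrow> bool" where
  "preadditive C \<longleftrightarrow> category C \<and>
     (\<forall>X\<in>Obj C. \<forall>Y\<in>Obj C.
        Zro C X Y \<in> hom C X Y \<and>
        (\<forall>f\<in>hom C X Y. \<forall>g\<in>hom C X Y. Pls C f g \<in> hom C X Y) \<and>
        (\<forall>f\<in>hom C X Y. Ngt C f \<in> hom C X Y) \<and>
        (\<forall>f\<in>hom C X Y. \<forall>g\<in>hom C X Y. \<forall>h\<in>hom C X Y.
            Pls C (Pls C f g) h = Pls C f (Pls C g h)) \<and>
        (\<forall>f\<in>hom C X Y. \<forall>g\<in>hom C X Y. Pls C f g = Pls C g f) \<and>
        (\<forall>f\<in>hom C X Y. Pls C f (Zro C X Y) = f) \<and>
        (\<forall>f\<in>hom C X Y. Pls C f (Ngt C f) = Zro C X Y)) \<and>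
     (\<forall>X Y Z f g g'. f \<in> hom C X Y \<longrightarrow> g \<in> hom C Y Z \<longrightarrow> g' \<in> hom C Y Z \<longrightarrow>
         Cmp C (Pls C g g') f = Pls C (Cmp C g f) (Cmp C g' f)) \<and>
     (\<forall>X Y Z f f' g. f \<in> hom C X Y \<longrightarrow> f' \<in> hom C X Y \<longrightarrow> g \<in> hom C Y Z \<longrightarrow>
         Cmp C g (Pls C f f') = Pls C (Cmp C g f) (Cmp C g f'))"

definition zero_obj :: "('o,'m) tricat \<Rightarrow> 'o \<Rightarrow> bool" where
  "zero_obj C Z \<longleftrightarrow> Z \<in> Obj C \<and>
     (\<forall>X\<in>Obj C. hom C Z X = {Zro C Z X} \<and> hom C X Z = {Zro C X Z})"

definition is_biprod ::
  "('o,'m) tricat \<Rightarrow> 'o list \<Rightarrow> 'o \<Rightarrow> 'm list \<Rightarrow> 'm list \<Rightarrow> bool" where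
  "is_biprod C Xs P ins prs \<longleftrightarrow> P \<in> Obj C \<and>
     length ins = length Xs \<and> length prs = length Xs \<and>
     (\<forall>i<length Xs. ins ! i \<in> hom C (Xs ! i) P \<and> prs ! i \<in> hom C P (Xs ! i)) \<and>
     (\<forall>i<length Xs. \<forall>j<length Xs.
        Cmp C (prs ! i) (ins ! j) = (if i = j then Idn C (Xs ! i) else Zro C (Xs ! j) (Xs ! i))) \<and>
     foldr (\<lambda>i acc. Pls C (Cmp C (ins ! i) (prs ! i)) acc) [0..<length Xs] (Zro C P P)
       = Idn C P"

definition additive :: "('o,'m) tricat \<Rightarrow> bool" where
  "additive C \<longleftrightarrow> preadditive C \<and> (\<exists>Z. zero_obj C Z) \<and>
     (\<forall>X\<in>Obj C. \<forall>Y\<in>Obj C. \<exists>P ins prs. is_biprod C [X, Y] P ins prs)"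

definition iso :: "('o,'m) tricat \<Rightarrow> 'm \<Rightarrow> bool" where
  "iso C f \<longleftrightarrow> f \<in> Arr C \<and>
     (\<exists>g\<in>hom C (Cod C f) (Dom C f).
        Cmp C g f = Idn C (Dom C f) \<and> Cmp C f g = Idn C (Cod C f))"

definition "functor" ::
  "('o,'m) tricat \<Rightarrow> ('p,'n) tricat \<Rightarrow> ('o \<Rightarrow> 'p) \<Rightarrow> ('m \<Rightarrow> 'n) \<Rightarrow> bool" where
  "functor C D FO FM \<longleftrightarrow>
     (\<forall>X\<in>Obj C. FO X \<in> Obj D) \<and>
     (\<forall>X Y f. f \<in> hom C X Y \<longrightarrow> FM f \<in> hom D (FO X) (FO Y)) \<and>
     (\<forall>X\<in>Obj C. FM (Idn C X) = Idn D (FO X)) \<and>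
     (\<forall>X Y Z f g. f \<in> hom C X Y \<longrightarrow> g \<in> hom C Y Z \<longrightarrow>
        FM (Cmp C g f) = Cmp D (FM g) (FM f))"

definition additive_functor ::
  "('o,'m) tricat \<Rightarrow> ('p,'n) tricat \<Rightarrow> ('o \<Rightarrow> 'p) \<Rightarrow> ('m \<Rightarrow> 'n) \<Rightarrow> bool" where
  "additive_functor C D FO FM \<longleftrightarrow> functor C D FO FM \<and>
     (\<forall>X Y f g. f \<in> hom C X Y \<longrightarrow> g \<in> hom C X Y \<longrightarrow> FM (Pls C f g) = Pls D (FM f) (FM g))"

definition is_triangle :: "('o,'m) tricat \<Rightarrow> 'm \<times> 'm \<times> 'm \<Rightarrow> bool" where
  "is_triangle C t \<longleftrightarrow> (case t of (u, v, w) \<Rightarrow>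
     u \<in> Arr C \<and> v \<in> hom C (Cod C u) (Cod C v) \<and> Cod C v \<in> Obj C \<and>
     w \<in> hom C (Cod C v) (ShO C (Dom C u)))"

definition triangulated :: "('o,'m) tricat \<Rightarrow> bool" where
  "triangulated C \<longleftrightarrow> additive C \<and>
     \<comment> \<open>the shift is an additive auto-equivalence\<close>
     additive_functor C C (ShO C) (ShA C) \<and>
     (\<forall>X\<in>Obj C. \<forall>Y\<in>Obj C. bij_betw (ShA C) (hom C X Y) (hom C (ShO C X) (ShO C Y))) \<and>
     (\<forall>Y\<in>Obj C. \<exists>X\<in>Obj C. \<exists>f\<in>hom C (ShO C X) Y. iso C f) \<and>
     \<comment> \<open>distinguished triangles are triangles\<close>
     (\<forall>t\<in>Dist C. is_triangle C t) \<and>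
     \<comment> \<open>TR1\<close>
     (\<forall>X\<in>Obj C. \<forall>Z. zero_obj C Z \<longrightarrow>
        (Idn C X, Zro C X Z, Zro C Z (ShO C X)) \<in> Dist C) \<and>
     (\<forall>u v w u' v' w' a b c.
        is_triangle C (u, v, w) \<longrightarrow> (u', v', w') \<in> Dist C \<longrightarrow>
        a \<in> hom C (Dom C u) (Dom C u') \<longrightarrow> b \<in> hom C (Cod C u) (Cod C u') \<longrightarrow>
        c \<in> hom C (Cod C v) (Cod C v') \<longrightarrow> iso C a \<longrightarrow> iso C b \<longrightarrow> iso C c \<longrightarrow>
        Cmp C b u = Cmp C u' a \<longrightarrow> Cmp C c v = Cmp C v' b \<longrightarrow>
        Cmp C (ShA C a) w = Cmp C w' c \<longrightarrow> (u, v, w) \<in> Dist C) \<and>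
     (\<forall>u\<in>Arr C. \<exists>v w. (u, v, w) \<in> Dist C) \<and>
     \<comment> \<open>TR2 (rotation)\<close>
     (\<forall>u v w. is_triangle C (u, v, w) \<longrightarrow>
        ((u, v, w) \<in> Dist C \<longleftrightarrow> (v, w, Ngt C (ShA C u)) \<in> Dist C)) \<and>
     \<comment> \<open>TR3 (morphisms of triangles)\<close>
     (\<forall>u v w u' v' w' f g.
        (u, v, w) \<in> Dist C \<longrightarrow> (u', v', w') \<in> Dist C \<longrightarrow>
        f \<in> hom C (Dom C u) (Dom C u') \<longrightarrow> g \<in> hom C (Cod C u) (Cod C u') \<longrightarrow>
        Cmp C g u = Cmp C u' f \<longrightarrow>
        (\<exists>h\<in>hom C (Cod C v) (Cod C v').
           Cmp C h v = Cmp C v' g \<and> Cmp C (ShA C f) w = Cmp C w' h)) \<and>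
     \<comment> \<open>TR4 (octahedral axiom)\<close>
     (\<forall>u v j k l i m n.
        (u, j, k) \<in> Dist C \<longrightarrow> (v, l, i) \<in> Dist C \<longrightarrow> (Cmp C v u, m, n) \<in> Dist C \<longrightarrow>
        Dom C v = Cod C u \<longrightarrow>
        (\<exists>f\<in>hom C (Cod C j) (Cod C m). \<exists>g\<in>hom C (Cod C m) (Cod C l).
           (f, g, Cmp C (ShA C j) i) \<in> Dist C \<and>
           Cmp C f j = Cmp C m v \<and> Cmp C n f = k \<and> Cmp C g m = l \<and>
           Cmp C i g = Cmp C (ShA C u) n))"

definition triangle_functor ::
  "('o,'m) tricat \<Rightarrow> ('p,'n) tricat \<Rightarrow> ('o \<Rightarrow> 'p) \<Rightarrow> ('m \<Rightarrow> 'n) \<Rightarrow> bool" where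
  "triangle_functor C D FO FM \<longleftrightarrow> additive_functor C D FO FM \<and>
     (\<exists>\<phi>. (\<forall>X\<in>Obj C. \<phi> X \<in> hom D (FO (ShO C X)) (ShO D (FO X)) \<and> iso D (\<phi> X)) \<and>
          (\<forall>f\<in>Arr C. Cmp D (\<phi> (Cod C f)) (FM (ShA C f)) = Cmp D (ShA D (FM f)) (\<phi> (Dom C f))) \<and>
          (\<forall>u v w. (u, v, w) \<in> Dist C \<longrightarrow>
              (FM u, FM v, Cmp D (\<phi> (Dom C u)) (FM w)) \<in> Dist D))"

text \<open>adjunction C D F G: F : C -> D is left adjoint to G : D -> C
(unit/counit formulation with the triangle identities).\<close>

definition adjunction ::
  "('o,'m) tricat \<Rightarrow> ('p,'n) tricat \<Rightarrow> ('o \<Rightarrow> 'p) \<Rightarrow> ('m \<Rightarrow> 'n)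
     \<Rightarrow> ('p \<Rightarrow> 'o) \<Rightarrow> ('n \<Rightarrow> 'm) \<Rightarrow> bool" where
  "adjunction C D FO FM GO GM \<longleftrightarrow> functor C D FO FM \<and> functor D C GO GM \<and>
     (\<exists>\<eta> \<epsilon>.
        (\<forall>X\<in>Obj C. \<eta> X \<in> hom C X (GO (FO X))) \<and>
        (\<forall>f\<in>Arr C. Cmp C (\<eta> (Cod C f)) f = Cmp C (GM (FM f)) (\<eta> (Dom C f))) \<and>
        (\<forall>Y\<in>Obj D. \<epsilon> Y \<in> hom D (FO (GO Y)) Y) \<and>
        (\<forall>g\<in>Arr D. Cmp D g (\<epsilon> (Dom D g)) = Cmp D (\<epsilon> (Cod D g)) (FM (GM g))) \<and>
        (\<forall>X\<in>Obj C. Cmp D (\<epsilon> (FO X)) (FM (\<eta> X)) = Idn D (FO X)) \<and>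
        (\<forall>Y\<in>Obj D. Cmp C (GM (\<epsilon> Y)) (\<eta> (GO Y)) = Idn C (GO Y)))"

definition rel_projective :: "('o,'m) tricat \<Rightarrow> ('m \<Rightarrow> 'n) \<Rightarrow> 'o \<Rightarrow> bool" where
  "rel_projective C TM Q \<longleftrightarrow> (\<forall>X\<in>Obj C. inj_on TM (hom C Q X))"

definition rel_injective :: "('o,'m) tricat \<Rightarrow> ('m \<Rightarrow> 'n) \<Rightarrow> 'o \<Rightarrow> bool" where
  "rel_injective C TM Q \<longleftrightarrow> (\<forall>X\<in>Obj C. inj_on TM (hom C X Q))"

definition in_add_im :: "('o,'m) tricat \<Rightarrow> ('p,'n) tricat \<Rightarrow> ('p \<Rightarrow> 'o) \<Rightarrow> 'o \<Rightarrow> bool" where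
  "in_add_im C D SO Q \<longleftrightarrow>
     (\<exists>Ls P ins prs s r. set Ls \<subseteq> Obj D \<and> is_biprod C (map SO Ls) P ins prs \<and>
        s \<in> hom C Q P \<and> r \<in> hom C P Q \<and> Cmp C r s = Idn C Q)"

end

(* For S left adjoint to T, a morphism f : S L -> X is the adjunct
   eps_X o S(T f) o S(eta_L) of T f, so T is injective on morphisms out of S L; this passes
   to finite biproducts and retracts, so every object of add(im S) is T-relative projective.
   Conversely, let Q be T-relative projective and complete the counit eps_Q : S T Q -> Q to a
   distinguished triangle S T Q -> Q -v-> Z -> Sigma S T Q.  By a triangle identity T eps_Q is
   a split epimorphism, and v o eps_Q = 0, so T v = 0, hence v = 0; exactness of Hom(Q, -)
   along the triangle then splits eps_Q, making Q a summand of S T Q.  The injective case is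
   dual: the unit eta_Q : Q -> S T Q is put in the middle of a distinguished triangle and
   Hom(-, Q) is used.  Only the additivity of T enters, not its compatibility with triangles. *)

theory Submission
  imports Defs
begin

section \<open>Preadditive categories and additive functors\<close>

context
  fixes C :: "('o,'m) tricat"
  assumes C: "category C"
begin

lemma hom_objs:
  assumes "f \<in> hom C X Y"
  shows "X \<in> Obj C" and "Y \<in> Obj C"
  using C assms unfolding category_def hom_def by auto

lemma comp_hom: "f \<in> hom C X Y \<Longrightarrow> g \<in> hom C Y Z \<Longrightarrow> Cmp C g f \<in> hom C X Z"
  using C unfolding category_def by blast

lemma comp_assoc:
  "f \<in> hom C X Y \<Longrightarrow> g \<in> hom C Y Z \<Longrightarrow> h \<in> hom C Z W \<Longrightarrow>
     Cmp C h (Cmp C g f) = Cmp C (Cmp C h g) f"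
  using C unfolding category_def by blast

lemma comp_id_right: "f \<in> hom C X Y \<Longrightarrow> Cmp C f (Idn C X) = f"
  using C unfolding category_def by blast

lemma comp_id_left: "f \<in> hom C X Y \<Longrightarrow> Cmp C (Idn C Y) f = f"
  using C unfolding category_def by blast

lemma id_hom: "X \<in> Obj C \<Longrightarrow> Idn C X \<in> hom C X X"
  using C unfolding category_def by blast

lemma iso_id: "X \<in> Obj C \<Longrightarrow> iso C (Idn C X)"
  using id_hom comp_id_left by (fastforce simp: iso_def hom_def)

lemma iso_inverse:
  "iso C f \<Longrightarrow> f \<in> hom C X Y \<Longrightarrow> \<exists>g\<in>hom C Y X. Cmp C g f = Idn C X \<and> Cmp C f g = Idn C Y"
  unfolding iso_def hom_def by auto

end

context
  fixes C :: "('o,'m) tricat"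
  assumes C: "preadditive C"
begin

lemma preadditive_category: "category C"
  using C unfolding preadditive_def by simp

lemma hom_abelian:
  assumes "X \<in> Obj C" "Y \<in> Obj C"
  shows zro_hom: "Zro C X Y \<in> hom C X Y"
    and "f \<in> hom C X Y \<Longrightarrow> g \<in> hom C X Y \<Longrightarrow> Pls C f g \<in> hom C X Y"
    and "f \<in> hom C X Y \<Longrightarrow> Ngt C f \<in> hom C X Y"
    and "f \<in> hom C X Y \<Longrightarrow> g \<in> hom C X Y \<Longrightarrow> h \<in> hom C X Y \<Longrightarrow>
           Pls C (Pls C f g) h = Pls C f (Pls C g h)"
    and "f \<in> hom C X Y \<Longrightarrow> g \<in> hom C X Y \<Longrightarrow> Pls C f g = Pls C g f"
    and "f \<in> hom C X Y \<Longrightarrow> Pls C f (Zro C X Y) = f"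
    and "f \<in> hom C X Y \<Longrightarrow> Pls C f (Ngt C f) = Zro C X Y"
  using C[unfolded preadditive_def, THEN conjunct2, THEN conjunct1] assms by blast+

lemma
  assumes f: "f \<in> hom C X Y"
  shows pls_hom: "g \<in> hom C X Y \<Longrightarrow> Pls C f g \<in> hom C X Y"
    and ngt_hom: "Ngt C f \<in> hom C X Y"
    and pls_assoc: "g \<in> hom C X Y \<Longrightarrow> h \<in> hom C X Y \<Longrightarrow>
           Pls C (Pls C f g) h = Pls C f (Pls C g h)"
    and pls_comm: "g \<in> hom C X Y \<Longrightarrow> Pls C f g = Pls C g f"
    and pls_zro: "Pls C f (Zro C X Y) = f"
    and pls_ngt: "Pls C f (Ngt C f) = Zro C X Y"
  using hom_abelian(2-7)[OF hom_objs[OF preadditive_category f] f] by blast+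

lemma comp_pls_left:
  "f \<in> hom C X Y \<Longrightarrow> g \<in> hom C Y Z \<Longrightarrow> g' \<in> hom C Y Z \<Longrightarrow>
     Cmp C (Pls C g g') f = Pls C (Cmp C g f) (Cmp C g' f)"
  using C[unfolded preadditive_def, THEN conjunct2, THEN conjunct2, THEN conjunct1] by blast

lemma comp_pls_right:
  "f \<in> hom C X Y \<Longrightarrow> f' \<in> hom C X Y \<Longrightarrow> g \<in> hom C Y Z \<Longrightarrow>
     Cmp C g (Pls C f f') = Pls C (Cmp C g f) (Cmp C g f')"
  using C[unfolded preadditive_def, THEN conjunct2, THEN conjunct2, THEN conjunct2] by blast

lemma zro_pls: "f \<in> hom C X Y \<Longrightarrow> Pls C (Zro C X Y) f = f"
  by (metis hom_objs pls_comm pls_zro preadditive_category zro_hom)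

lemma pls_idem_eq_zro:
  assumes a: "a \<in> hom C X Y" and idem: "Pls C a a = a"
  shows "a = Zro C X Y"
proof -
  have "Zro C X Y = Pls C (Pls C a a) (Ngt C a)" using idem pls_ngt[OF a] by simp
  also have "\<dots> = Pls C a (Pls C a (Ngt C a))" using pls_assoc a ngt_hom by blast
  also have "\<dots> = a" using pls_ngt[OF a] pls_zro[OF a] by simp
  finally show ?thesis by simp
qed

lemma ngt_unique:
  assumes a: "a \<in> hom C X Y" and b: "b \<in> hom C X Y" and sum: "Pls C a b = Zro C X Y"
  shows "b = Ngt C a"
proof -
  have na: "Ngt C a \<in> hom C X Y" using ngt_hom[OF a] .
  have "b = Pls C (Pls C (Ngt C a) a) b"
    using pls_ngt[OF a] pls_comm[OF a na] zro_pls[OF b] by simp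
  also have "\<dots> = Pls C (Ngt C a) (Pls C a b)" using pls_assoc na a b by blast
  also have "\<dots> = Ngt C a" using sum pls_zro[OF na] by simp
  finally show ?thesis .
qed

lemma ngt_ngt: "a \<in> hom C X Y \<Longrightarrow> Ngt C (Ngt C a) = a"
  by (metis ngt_hom ngt_unique pls_comm pls_ngt)

lemma comp_zro_right:
  assumes g: "g \<in> hom C Y Z" and X: "X \<in> Obj C"
  shows "Cmp C g (Zro C X Y) = Zro C X Z"
proof -
  have z: "Zro C X Y \<in> hom C X Y" using zro_hom X hom_objs[OF preadditive_category g] by simp
  then have "Cmp C g (Zro C X Y) = Pls C (Cmp C g (Zro C X Y)) (Cmp C g (Zro C X Y))"
    using comp_pls_right[OF z z g] pls_zro[OF z] by simp
  then show ?thesis using pls_idem_eq_zro[OF comp_hom[OF preadditive_category z g]] by simp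
qed

lemma comp_zro_left:
  assumes f: "f \<in> hom C X Y" and Z: "Z \<in> Obj C"
  shows "Cmp C (Zro C Y Z) f = Zro C X Z"
proof -
  have z: "Zro C Y Z \<in> hom C Y Z" using zro_hom Z hom_objs[OF preadditive_category f] by simp
  then have "Cmp C (Zro C Y Z) f = Pls C (Cmp C (Zro C Y Z) f) (Cmp C (Zro C Y Z) f)"
    using comp_pls_left[OF f z z] pls_zro[OF z] by simp
  then show ?thesis using pls_idem_eq_zro[OF comp_hom[OF preadditive_category f z]] by simp
qed

lemma comp_ngt_right:
  assumes f: "f \<in> hom C X Y" and g: "g \<in> hom C Y Z"
  shows "Cmp C g (Ngt C f) = Ngt C (Cmp C g f)"
proof -
  have "Pls C (Cmp C g f) (Cmp C g (Ngt C f)) = Cmp C g (Pls C f (Ngt C f))"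
    using comp_pls_right[OF f ngt_hom[OF f] g] by simp
  also have "\<dots> = Zro C X Z"
    using pls_ngt[OF f] comp_zro_right[OF g] hom_objs[OF preadditive_category f] by simp
  finally show ?thesis
    using ngt_unique comp_hom[OF preadditive_category] f g ngt_hom by blast
qed

lemma comp_ngt_left:
  assumes f: "f \<in> hom C X Y" and g: "g \<in> hom C Y Z"
  shows "Cmp C (Ngt C g) f = Ngt C (Cmp C g f)"
proof -
  have "Pls C (Cmp C g f) (Cmp C (Ngt C g) f) = Cmp C (Pls C g (Ngt C g)) f"
    using comp_pls_left[OF f g ngt_hom[OF g]] by simp
  also have "\<dots> = Zro C X Z"
    using pls_ngt[OF g] comp_zro_left[OF f] hom_objs[OF preadditive_category g] by simp
  finally show ?thesis
    using ngt_unique comp_hom[OF preadditive_category] f g ngt_hom by blast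
qed

lemma comp_foldr_pls_right:
  assumes "\<forall>i\<in>set js. c i \<in> hom C X Y" and "z \<in> hom C X Y" and g: "g \<in> hom C Y W"
  shows "Cmp C g (foldr (\<lambda>i acc. Pls C (c i) acc) js z)
           = foldr (\<lambda>i acc. Pls C (Cmp C g (c i)) acc) js (Cmp C g z)"
  using assms(1,2)
proof (induction js)
  case (Cons i js)
  have ci: "c i \<in> hom C X Y" using Cons.prems by simp
  have rest: "foldr (\<lambda>i acc. Pls C (c i) acc) js z \<in> hom C X Y"
    using Cons.prems by (induction js) (auto intro: pls_hom)
  show ?case using Cons comp_pls_right[OF ci rest g] by simp
qed simp

lemma comp_foldr_pls_left:
  assumes "\<forall>i\<in>set js. c i \<in> hom C X Y" and "z \<in> hom C X Y" and f: "f \<in> hom C W X"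
  shows "Cmp C (foldr (\<lambda>i acc. Pls C (c i) acc) js z) f
           = foldr (\<lambda>i acc. Pls C (Cmp C (c i) f) acc) js (Cmp C z f)"
  using assms(1,2)
proof (induction js)
  case (Cons i js)
  have ci: "c i \<in> hom C X Y" using Cons.prems by simp
  have rest: "foldr (\<lambda>i acc. Pls C (c i) acc) js z \<in> hom C X Y"
    using Cons.prems by (induction js) (auto intro: pls_hom)
  show ?case using Cons comp_pls_left[OF f ci rest] by simp
qed simp

lemma biprod_ext_right:
  assumes bp: "is_biprod C Xs P ins prs"
    and a: "a \<in> hom C P W" and b: "b \<in> hom C P W"
    and on_ins: "\<forall>i<length Xs. Cmp C a (ins ! i) = Cmp C b (ins ! i)"
  shows "a = b"
proof -
  let ?c = "\<lambda>i. Cmp C (ins ! i) (prs ! i)"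
  have P: "P \<in> Obj C" using bp unfolding is_biprod_def by simp
  have ins_prs: "\<forall>i<length Xs. ins ! i \<in> hom C (Xs ! i) P \<and> prs ! i \<in> hom C P (Xs ! i)"
    using bp unfolding is_biprod_def by simp
  have c: "\<forall>i\<in>set [0..<length Xs]. ?c i \<in> hom C P P"
    using ins_prs comp_hom[OF preadditive_category] by auto
  have z: "Zro C P P \<in> hom C P P" using zro_hom P by simp
  have sum: "foldr (\<lambda>i acc. Pls C (?c i) acc) [0..<length Xs] (Zro C P P) = Idn C P"
    using bp unfolding is_biprod_def by simp
  have "\<forall>i\<in>set [0..<length Xs]. Cmp C a (?c i) = Cmp C b (?c i)"
    using ins_prs on_ins comp_assoc[OF preadditive_category] a b by auto
  moreover have "Cmp C a (Zro C P P) = Cmp C b (Zro C P P)"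
    using comp_zro_right a b P by simp
  ultimately have "foldr (\<lambda>i acc. Pls C (Cmp C a (?c i)) acc) [0..<length Xs] (Cmp C a (Zro C P P))
      = foldr (\<lambda>i acc. Pls C (Cmp C b (?c i)) acc) [0..<length Xs] (Cmp C b (Zro C P P))"
    by (intro foldr_cong) simp_all
  then have "Cmp C a (Idn C P) = Cmp C b (Idn C P)"
    unfolding sum[symmetric] comp_foldr_pls_right[OF c z a] comp_foldr_pls_right[OF c z b] .
  then show ?thesis using comp_id_right[OF preadditive_category] a b by metis
qed

lemma biprod_ext_left:
  assumes bp: "is_biprod C Xs P ins prs"
    and a: "a \<in> hom C W P" and b: "b \<in> hom C W P"
    and on_prs: "\<forall>i<length Xs. Cmp C (prs ! i) a = Cmp C (prs ! i) b"
  shows "a = b"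
proof -
  let ?c = "\<lambda>i. Cmp C (ins ! i) (prs ! i)"
  have P: "P \<in> Obj C" using bp unfolding is_biprod_def by simp
  have ins_prs: "\<forall>i<length Xs. ins ! i \<in> hom C (Xs ! i) P \<and> prs ! i \<in> hom C P (Xs ! i)"
    using bp unfolding is_biprod_def by simp
  have c: "\<forall>i\<in>set [0..<length Xs]. ?c i \<in> hom C P P"
    using ins_prs comp_hom[OF preadditive_category] by auto
  have z: "Zro C P P \<in> hom C P P" using zro_hom P by simp
  have sum: "foldr (\<lambda>i acc. Pls C (?c i) acc) [0..<length Xs] (Zro C P P) = Idn C P"
    using bp unfolding is_biprod_def by simp
  have "\<forall>i\<in>set [0..<length Xs]. Cmp C (?c i) a = Cmp C (?c i) b"
  proof
    fix i assume "i \<in> set [0..<length Xs]"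
    then have "ins ! i \<in> hom C (Xs ! i) P" "prs ! i \<in> hom C P (Xs ! i)"
      and "Cmp C (prs ! i) a = Cmp C (prs ! i) b"
      using ins_prs on_prs by auto
    then show "Cmp C (?c i) a = Cmp C (?c i) b"
      using comp_assoc[OF preadditive_category a] comp_assoc[OF preadditive_category b] by metis
  qed
  moreover have "Cmp C (Zro C P P) a = Cmp C (Zro C P P) b"
    using comp_zro_left a b P by simp
  ultimately have "foldr (\<lambda>i acc. Pls C (Cmp C (?c i) a) acc) [0..<length Xs] (Cmp C (Zro C P P) a)
      = foldr (\<lambda>i acc. Pls C (Cmp C (?c i) b) acc) [0..<length Xs] (Cmp C (Zro C P P) b)"
    by (intro foldr_cong) simp_all
  then have "Cmp C (Idn C P) a = Cmp C (Idn C P) b"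
    unfolding sum[symmetric] comp_foldr_pls_left[OF c z a] comp_foldr_pls_left[OF c z b] .
  then show ?thesis using comp_id_left[OF preadditive_category] a b by metis
qed

lemma singleton_biprod: "X \<in> Obj C \<Longrightarrow> is_biprod C [X] X [Idn C X] [Idn C X]"
  using id_hom[OF preadditive_category] comp_id_left[OF preadditive_category] pls_zro
  by (fastforce simp: is_biprod_def)

end
context
  fixes C :: "('o,'m) tricat" and D :: "('p,'n) tricat" and FO FM
  assumes F: "functor C D FO FM"
begin

lemma functor_obj: "X \<in> Obj C \<Longrightarrow> FO X \<in> Obj D"
  using F unfolding functor_def by blast

lemma functor_hom: "f \<in> hom C X Y \<Longrightarrow> FM f \<in> hom D (FO X) (FO Y)"
  using F unfolding functor_def by blast

lemma functor_id: "X \<in> Obj C \<Longrightarrow> FM (Idn C X) = Idn D (FO X)"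
  using F unfolding functor_def by blast

lemma functor_comp: "f \<in> hom C X Y \<Longrightarrow> g \<in> hom C Y Z \<Longrightarrow> FM (Cmp C g f) = Cmp D (FM g) (FM f)"
  using F unfolding functor_def by blast

end

context
  fixes C :: "('o,'m) tricat" and D :: "('p,'n) tricat" and FO FM
  assumes F: "additive_functor C D FO FM" and C: "preadditive C" and D: "preadditive D"
begin

lemma additive_functor_functor: "functor C D FO FM"
  using F unfolding additive_functor_def by simp

lemma additive_functor_zro:
  assumes X: "X \<in> Obj C" and Y: "Y \<in> Obj C"
  shows "FM (Zro C X Y) = Zro D (FO X) (FO Y)"
proof -
  have z: "Zro C X Y \<in> hom C X Y" using zro_hom[OF C X Y] .
  then have "FM (Zro C X Y) = Pls D (FM (Zro C X Y)) (FM (Zro C X Y))"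
    using F pls_zro[OF C z] unfolding additive_functor_def by metis
  then show ?thesis
    using pls_idem_eq_zro[OF D functor_hom[OF additive_functor_functor z]] by simp
qed

lemma additive_functor_ngt:
  assumes f: "f \<in> hom C X Y"
  shows "FM (Ngt C f) = Ngt D (FM f)"
proof -
  have n: "Ngt C f \<in> hom C X Y" using ngt_hom[OF C f] .
  have "Pls D (FM f) (FM (Ngt C f)) = FM (Pls C f (Ngt C f))"
    using F f n unfolding additive_functor_def by metis
  also have "\<dots> = Zro D (FO X) (FO Y)"
    using pls_ngt[OF C f] additive_functor_zro hom_objs[OF preadditive_category[OF C] f] by simp
  finally show ?thesis
    using ngt_unique[OF D] functor_hom[OF additive_functor_functor] f n by blast
qed

end

section \<open>Triangulated categories\<close>

lemma triangulatedD:
  assumes "triangulated C"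
  shows "additive C"
    and "additive_functor C C (ShO C) (ShA C)"
    and "\<forall>X\<in>Obj C. \<forall>Y\<in>Obj C. bij_betw (ShA C) (hom C X Y) (hom C (ShO C X) (ShO C Y))"
    and "\<forall>Y\<in>Obj C. \<exists>X\<in>Obj C. \<exists>f\<in>hom C (ShO C X) Y. iso C f"
    and "\<forall>t\<in>Dist C. is_triangle C t"
    and "\<forall>X\<in>Obj C. \<forall>Z. zero_obj C Z \<longrightarrow> (Idn C X, Zro C X Z, Zro C Z (ShO C X)) \<in> Dist C"
    and "\<forall>u v w u' v' w' a b c.
        is_triangle C (u, v, w) \<longrightarrow> (u', v', w') \<in> Dist C \<longrightarrow>
        a \<in> hom C (Dom C u) (Dom C u') \<longrightarrow> b \<in> hom C (Cod C u) (Cod C u') \<longrightarrow>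
        c \<in> hom C (Cod C v) (Cod C v') \<longrightarrow> iso C a \<longrightarrow> iso C b \<longrightarrow> iso C c \<longrightarrow>
        Cmp C b u = Cmp C u' a \<longrightarrow> Cmp C c v = Cmp C v' b \<longrightarrow>
        Cmp C (ShA C a) w = Cmp C w' c \<longrightarrow> (u, v, w) \<in> Dist C"
    and "\<forall>u\<in>Arr C. \<exists>v w. (u, v, w) \<in> Dist C"
    and "\<forall>u v w. is_triangle C (u, v, w) \<longrightarrow>
        ((u, v, w) \<in> Dist C \<longleftrightarrow> (v, w, Ngt C (ShA C u)) \<in> Dist C)"
    and "\<forall>u v w u' v' w' f g.
        (u, v, w) \<in> Dist C \<longrightarrow> (u', v', w') \<in> Dist C \<longrightarrow>
        f \<in> hom C (Dom C u) (Dom C u') \<longrightarrow> g \<in> hom C (Cod C u) (Cod C u') \<longrightarrow>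
        Cmp C g u = Cmp C u' f \<longrightarrow>
        (\<exists>h\<in>hom C (Cod C v) (Cod C v').
           Cmp C h v = Cmp C v' g \<and> Cmp C (ShA C f) w = Cmp C w' h)"
  using assms unfolding triangulated_def by - (elim conjE, assumption)+

context
  fixes C :: "('o,'m) tricat"
  assumes C: "triangulated C"
begin

lemma triangulated_preadditive: "preadditive C"
  using triangulatedD(1)[OF C] unfolding additive_def by simp

lemma triangulated_category: "category C"
  using preadditive_category[OF triangulated_preadditive] .

lemma zero_obj_ex: "\<exists>N. zero_obj C N"
  using triangulatedD(1)[OF C] unfolding additive_def by simp

lemma shift_functor: "functor C C (ShO C) (ShA C)"
  using additive_functor_functor[OF triangulatedD(2)[OF C] triangulated_preadditive
    triangulated_preadditive] .

lemma shift_ngt: "f \<in> hom C X Y \<Longrightarrow> ShA C (Ngt C f) = Ngt C (ShA C f)"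
  using additive_functor_ngt[OF triangulatedD(2)[OF C] triangulated_preadditive
    triangulated_preadditive] .

lemma shift_full:
  assumes "X \<in> Obj C" "Y \<in> Obj C" "g \<in> hom C (ShO C X) (ShO C Y)"
  shows "\<exists>f\<in>hom C X Y. g = ShA C f"
  using triangulatedD(3)[OF C] assms unfolding bij_betw_def by blast

lemma shift_faithful:
  assumes "f \<in> hom C X Y" "g \<in> hom C X Y" "ShA C f = ShA C g"
  shows "f = g"
  using triangulatedD(3)[OF C] hom_objs[OF triangulated_category assms(1)] assms
  unfolding bij_betw_def inj_on_def by blast

lemma shift_ess_surj: "Y \<in> Obj C \<Longrightarrow> \<exists>X\<in>Obj C. \<exists>f\<in>hom C (ShO C X) Y. iso C f"
  using triangulatedD(4)[OF C] by blast

lemma dist_homs: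
  assumes "(u, v, w) \<in> Dist C"
  shows "u \<in> hom C (Dom C u) (Cod C u)" and "v \<in> hom C (Cod C u) (Cod C v)"
    and "w \<in> hom C (Cod C v) (ShO C (Dom C u))"
  using triangulatedD(5)[OF C] assms unfolding is_triangle_def by (auto simp: hom_def)

lemma dist_trivial: "X \<in> Obj C \<Longrightarrow> zero_obj C N \<Longrightarrow> (Idn C X, Zro C X N, Zro C N (ShO C X)) \<in> Dist C"
  using triangulatedD(6)[OF C] by blast

lemma dist_iso_closed:
  "is_triangle C (u, v, w) \<Longrightarrow> (u', v', w') \<in> Dist C \<Longrightarrow>
   a \<in> hom C (Dom C u) (Dom C u') \<Longrightarrow> b \<in> hom C (Cod C u) (Cod C u') \<Longrightarrow>
   c \<in> hom C (Cod C v) (Cod C v') \<Longrightarrow> iso C a \<Longrightarrow> iso C b \<Longrightarrow> iso C c \<Longrightarrow>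
   Cmp C b u = Cmp C u' a \<Longrightarrow> Cmp C c v = Cmp C v' b \<Longrightarrow>
   Cmp C (ShA C a) w = Cmp C w' c \<Longrightarrow> (u, v, w) \<in> Dist C"
  using triangulatedD(7)[OF C] by blast

lemma dist_completion: "u \<in> Arr C \<Longrightarrow> \<exists>v w. (u, v, w) \<in> Dist C"
  using triangulatedD(8)[OF C] by blast

lemma dist_rotate_iff:
  "is_triangle C (u, v, w) \<Longrightarrow> (u, v, w) \<in> Dist C \<longleftrightarrow> (v, w, Ngt C (ShA C u)) \<in> Dist C"
  using triangulatedD(9)[OF C] by blast

lemma dist_rotate: "(u, v, w) \<in> Dist C \<Longrightarrow> (v, w, Ngt C (ShA C u)) \<in> Dist C"
  using dist_rotate_iff triangulatedD(5)[OF C] by blast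

lemma dist_morphism_ex:
  "(u, v, w) \<in> Dist C \<Longrightarrow> (u', v', w') \<in> Dist C \<Longrightarrow>
   f \<in> hom C (Dom C u) (Dom C u') \<Longrightarrow> g \<in> hom C (Cod C u) (Cod C u') \<Longrightarrow>
   Cmp C g u = Cmp C u' f \<Longrightarrow>
   \<exists>h\<in>hom C (Cod C v) (Cod C v'). Cmp C h v = Cmp C v' g \<and> Cmp C (ShA C f) w = Cmp C w' h"
  using triangulatedD(10)[OF C] by blast

lemma dist_comp_zero:
  assumes d: "(u, v, w) \<in> Dist C" and u: "u \<in> hom C X Y" and v: "v \<in> hom C Y Z"
  shows "Cmp C v u = Zro C X Z"
proof -
  have pa: "preadditive C" by (rule triangulated_preadditive)
  have X: "X \<in> Obj C" using hom_objs[OF triangulated_category u] by simp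
  obtain N where N: "zero_obj C N" using zero_obj_ex by blast
  then have zXN: "Zro C X N \<in> hom C X N" using zro_hom[OF pa X] unfolding zero_obj_def by simp
  have "\<exists>h\<in>hom C (Cod C (Zro C X N)) (Cod C v). Cmp C h (Zro C X N) = Cmp C v u \<and>
          Cmp C (ShA C (Idn C X)) (Zro C N (ShO C X)) = Cmp C w h"
    using dist_morphism_ex[OF dist_trivial[OF X N] d] id_hom[OF triangulated_category X] u
    by (auto simp: hom_def)
  then obtain h where "h \<in> hom C N Z" and "Cmp C h (Zro C X N) = Cmp C v u"
    using zXN v by (auto simp: hom_def)
  then show ?thesis using comp_zro_right[OF pa _ X] by metis
qed

lemma dist_exact:
  assumes d: "(u, v, w) \<in> Dist C" and u: "u \<in> hom C X Y" and v: "v \<in> hom C Y Z"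
    and h: "h \<in> hom C W Y" and vh: "Cmp C v h = Zro C W Z"
  shows "\<exists>s\<in>hom C W X. Cmp C u s = h"
proof -
  have pa: "preadditive C" and cat: "category C"
    by (rule triangulated_preadditive, rule triangulated_category)
  have X: "X \<in> Obj C" and Z: "Z \<in> Obj C" and W: "W \<in> Obj C"
    using hom_objs[OF cat u] hom_objs[OF cat v] hom_objs[OF cat h] by simp_all
  have shW: "ShO C W \<in> Obj C" using functor_obj[OF shift_functor W] .
  obtain N where N: "zero_obj C N" using zero_obj_ex by blast
  then have NO: "N \<in> Obj C" unfolding zero_obj_def by simp
  have w: "w \<in> hom C Z (ShO C X)" using dist_homs(3)[OF d] u v by (simp add: hom_def)
  have "\<exists>k\<in>hom C (Cod C (Zro C N (ShO C W))) (Cod C w).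
          Cmp C k (Zro C N (ShO C W)) = Cmp C w (Zro C N Z) \<and>
          Cmp C (ShA C h) (Ngt C (ShA C (Idn C W))) = Cmp C (Ngt C (ShA C u)) k"
  proof (rule dist_morphism_ex[OF dist_rotate[OF dist_trivial[OF W N]] dist_rotate[OF d]])
    show "h \<in> hom C (Dom C (Zro C W N)) (Dom C v)"
      and "Zro C N Z \<in> hom C (Cod C (Zro C W N)) (Cod C v)"
      using h v zro_hom[OF pa W NO] zro_hom[OF pa NO Z] by (simp_all add: hom_def)
    show "Cmp C (Zro C N Z) (Zro C W N) = Cmp C v h"
      using vh comp_zro_right[OF pa zro_hom[OF pa NO Z] W] by simp
  qed
  then obtain k where k: "k \<in> hom C (ShO C W) (ShO C X)"
    and square: "Cmp C (ShA C h) (Ngt C (ShA C (Idn C W))) = Cmp C (Ngt C (ShA C u)) k"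
    using zro_hom[OF pa NO shW] w by (auto simp: hom_def)
  have sh: "ShA C h \<in> hom C (ShO C W) (ShO C Y)" and su: "ShA C u \<in> hom C (ShO C X) (ShO C Y)"
    using functor_hom[OF shift_functor] h u by simp_all
  have "Ngt C (ShA C h) = Ngt C (Cmp C (ShA C u) k)"
    using square functor_id[OF shift_functor W] comp_ngt_right[OF pa id_hom[OF cat shW] sh]
      comp_id_right[OF cat sh] comp_ngt_left[OF pa k su] by simp
  then have "ShA C h = Cmp C (ShA C u) k"
    using ngt_ngt[OF pa sh] ngt_ngt[OF pa comp_hom[OF cat k su]] by metis
  moreover obtain s where s: "s \<in> hom C W X" and "k = ShA C s"
    using shift_full[OF W X k] by blast
  ultimately have "ShA C h = ShA C (Cmp C u s)"
    using functor_comp[OF shift_functor s u] by simp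
  then have "h = Cmp C u s" using shift_faithful[OF h comp_hom[OF cat s u]] by simp
  then show ?thesis using s by blast
qed

lemma dist_coexact:
  assumes d: "(u, v, w) \<in> Dist C" and u: "u \<in> hom C X Y" and v: "v \<in> hom C Y Z"
    and h: "h \<in> hom C Y W" and hu: "Cmp C h u = Zro C X W"
  shows "\<exists>t\<in>hom C Z W. Cmp C t v = h"
proof -
  have pa: "preadditive C" and cat: "category C"
    by (rule triangulated_preadditive, rule triangulated_category)
  have X: "X \<in> Obj C" and W: "W \<in> Obj C"
    using hom_objs[OF cat u] hom_objs[OF cat h] by simp_all
  obtain V \<phi> where V: "V \<in> Obj C" and \<phi>: "\<phi> \<in> hom C (ShO C V) W" and "iso C \<phi>"
    using shift_ess_surj[OF W] by blast
  then obtain \<psi> where \<psi>: "\<psi> \<in> hom C W (ShO C V)" and \<phi>\<psi>: "Cmp C \<phi> \<psi> = Idn C W"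
    using iso_inverse[OF cat] by blast
  have shV: "ShO C V \<in> Obj C" using functor_obj[OF shift_functor V] .
  obtain N where N: "zero_obj C N" using zero_obj_ex by blast
  then have NO: "N \<in> Obj C" unfolding zero_obj_def by simp
  let ?g = "Cmp C \<psi> h"
  have g: "?g \<in> hom C Y (ShO C V)" using comp_hom[OF cat h \<psi>] .
  have ngt_id: "Ngt C (ShA C (Idn C V)) \<in> hom C (ShO C V) (ShO C V)"
    using ngt_hom[OF pa] functor_id[OF shift_functor V] id_hom[OF cat shV] by simp
  \<comment> \<open>compare with the twice rotated trivial triangle N \<rightarrow> \<Sigma>V \<rightarrow> \<Sigma>V, where \<Sigma>V \<cong> W\<close>
  have "\<exists>k\<in>hom C (Cod C v) (Cod C (Ngt C (ShA C (Idn C V)))).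
          Cmp C k v = Cmp C (Ngt C (ShA C (Idn C V))) ?g \<and>
          Cmp C (ShA C (Zro C X N)) w = Cmp C (Ngt C (ShA C (Zro C V N))) k"
  proof (rule dist_morphism_ex[OF d dist_rotate[OF dist_rotate[OF dist_trivial[OF V N]]]])
    show "Zro C X N \<in> hom C (Dom C u) (Dom C (Zro C N (ShO C V)))"
      and "?g \<in> hom C (Cod C u) (Cod C (Zro C N (ShO C V)))"
      using u g zro_hom[OF pa X NO] zro_hom[OF pa NO shV] by (simp_all add: hom_def)
    show "Cmp C ?g u = Cmp C (Zro C N (ShO C V)) (Zro C X N)"
      using comp_assoc[OF cat u h \<psi>, symmetric] hu comp_zro_right[OF pa \<psi> X]
        comp_zro_right[OF pa zro_hom[OF pa NO shV] X] by simp
  qed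
  then obtain k where k: "k \<in> hom C Z (ShO C V)"
    and kv: "Cmp C k v = Cmp C (Ngt C (ShA C (Idn C V))) ?g"
    using v ngt_id by (auto simp: hom_def)
  have "Cmp C k v = Ngt C ?g"
    using kv functor_id[OF shift_functor V] comp_ngt_left[OF pa g id_hom[OF cat shV]]
      comp_id_left[OF cat g] by simp
  then have "Cmp C (Cmp C \<phi> (Ngt C k)) v = Cmp C \<phi> ?g"
    using comp_assoc[OF cat v ngt_hom[OF pa k] \<phi>, symmetric] comp_ngt_left[OF pa v k]
      ngt_ngt[OF pa g] by simp
  also have "\<dots> = h" using comp_assoc[OF cat h \<psi> \<phi>] \<phi>\<psi> comp_id_left[OF cat h] by simp
  finally show ?thesis using comp_hom[OF cat ngt_hom[OF pa k] \<phi>] by blast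
qed

lemma dist_completion_middle:
  assumes f: "f \<in> Arr C"
  shows "\<exists>u w. (u, f, w) \<in> Dist C"
proof -
  have pa: "preadditive C" and cat: "category C"
    by (rule triangulated_preadditive, rule triangulated_category)
  let ?A = "Dom C f" and ?B = "Cod C f"
  have f_hom: "f \<in> hom C ?A ?B" using f by (simp add: hom_def)
  obtain v w where d: "(f, v, w) \<in> Dist C" using dist_completion[OF f] by blast
  let ?Z = "Cod C v"
  have v: "v \<in> hom C ?B ?Z" and w: "w \<in> hom C ?Z (ShO C ?A)" using dist_homs[OF d] by simp_all
  have A: "?A \<in> Obj C" and Z: "?Z \<in> Obj C" using hom_objs[OF cat f_hom] hom_objs[OF cat v]
    by simp_all
  obtain V \<phi> where V: "V \<in> Obj C" and \<phi>: "\<phi> \<in> hom C (ShO C V) ?Z" and iso\<phi>: "iso C \<phi>"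
    using shift_ess_surj[OF Z] by blast
  then obtain \<psi> where \<psi>: "\<psi> \<in> hom C ?Z (ShO C V)" and \<phi>\<psi>: "Cmp C \<phi> \<psi> = Idn C ?Z"
    using iso_inverse[OF cat] by blast
  have shV: "ShO C V \<in> Obj C" using functor_obj[OF shift_functor V] .
  have w\<phi>: "Cmp C w \<phi> \<in> hom C (ShO C V) (ShO C ?A)" using comp_hom[OF cat \<phi> w] .
  then obtain a where a: "a \<in> hom C V ?A" and w\<phi>_eq: "Cmp C w \<phi> = ShA C a"
    using shift_full[OF V A] by blast
  have \<psi>v: "Cmp C \<psi> v \<in> hom C ?B (ShO C V)" using comp_hom[OF cat v \<psi>] .
  have "(f, Cmp C \<psi> v, Cmp C w \<phi>) \<in> Dist C"
  proof (rule dist_iso_closed[OF _ d])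
    show "is_triangle C (f, Cmp C \<psi> v, Cmp C w \<phi>)"
      using f \<psi>v w\<phi> shV by (simp add: is_triangle_def hom_def)
    show "Idn C ?A \<in> hom C (Dom C f) (Dom C f)" and "Idn C ?B \<in> hom C (Cod C f) (Cod C f)"
      and "iso C (Idn C ?A)" and "iso C (Idn C ?B)"
      using id_hom[OF cat] iso_id[OF cat] hom_objs[OF cat f_hom] by simp_all
    show "\<phi> \<in> hom C (Cod C (Cmp C \<psi> v)) (Cod C v)" and "iso C \<phi>"
      using \<phi> \<psi>v iso\<phi> by (simp_all add: hom_def)
    show "Cmp C (Idn C ?B) f = Cmp C f (Idn C ?A)"
      using comp_id_left[OF cat f_hom] comp_id_right[OF cat f_hom] by simp
    show "Cmp C \<phi> (Cmp C \<psi> v) = Cmp C v (Idn C ?B)"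
      using comp_assoc[OF cat v \<psi> \<phi>] \<phi>\<psi> comp_id_left[OF cat v] comp_id_right[OF cat v] by simp
    show "Cmp C (ShA C (Idn C ?A)) (Cmp C w \<phi>) = Cmp C w \<phi>"
      using functor_id[OF shift_functor A] comp_id_left[OF cat w\<phi>] by simp
  qed
  moreover have "Ngt C (ShA C (Ngt C a)) = Cmp C w \<phi>"
    using shift_ngt[OF a] ngt_ngt[OF pa functor_hom[OF shift_functor a]] w\<phi>_eq by simp
  moreover have "is_triangle C (Ngt C a, f, Cmp C \<psi> v)"
    using ngt_hom[OF pa a] f_hom \<psi>v hom_objs[OF cat f_hom] by (simp add: is_triangle_def hom_def)
  ultimately have "(Ngt C a, f, Cmp C \<psi> v) \<in> Dist C"
    using dist_rotate_iff by simp
  then show ?thesis by blast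
qed

end
section \<open>Relative projectives and injectives\<close>

lemma adjunctionE:
  assumes "adjunction C D FO FM GO GM"
  obtains \<eta> \<epsilon> where
    "\<And>X. X \<in> Obj C \<Longrightarrow> \<eta> X \<in> hom C X (GO (FO X))"
    "\<And>f X Y. f \<in> hom C X Y \<Longrightarrow> Cmp C (\<eta> Y) f = Cmp C (GM (FM f)) (\<eta> X)"
    "\<And>Y. Y \<in> Obj D \<Longrightarrow> \<epsilon> Y \<in> hom D (FO (GO Y)) Y"
    "\<And>g X Y. g \<in> hom D X Y \<Longrightarrow> Cmp D g (\<epsilon> X) = Cmp D (\<epsilon> Y) (FM (GM g))"
    "\<And>X. X \<in> Obj C \<Longrightarrow> Cmp D (\<epsilon> (FO X)) (FM (\<eta> X)) = Idn D (FO X)"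
    "\<And>Y. Y \<in> Obj D \<Longrightarrow> Cmp C (GM (\<epsilon> Y)) (\<eta> (GO Y)) = Idn C (GO Y)"
  using assms unfolding adjunction_def hom_def by blast

lemma rel_projective_left_adjoint_obj:
  assumes adj: "adjunction C D FO FM GO GM" and C: "category C" and D: "category D"
    and X: "X \<in> Obj C"
  shows "rel_projective D GM (FO X)"
proof -
  obtain \<eta> \<epsilon> where \<eta>: "\<eta> X \<in> hom C X (GO (FO X))"
    and \<epsilon>: "\<And>Y. Y \<in> Obj D \<Longrightarrow> \<epsilon> Y \<in> hom D (FO (GO Y)) Y"
    and \<epsilon>_nat: "\<And>g X Y. g \<in> hom D X Y \<Longrightarrow> Cmp D g (\<epsilon> X) = Cmp D (\<epsilon> Y) (FM (GM g))"
    and triangle: "Cmp D (\<epsilon> (FO X)) (FM (\<eta> X)) = Idn D (FO X)"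
    using adjunctionE[OF adj] X by metis
  have F: "functor C D FO FM" using adj unfolding adjunction_def by simp
  have F\<eta>: "FM (\<eta> X) \<in> hom D (FO X) (FO (GO (FO X)))" using functor_hom[OF F \<eta>] .
  have FX: "FO X \<in> Obj D" using functor_obj[OF F X] .
  have adjunct: "f = Cmp D (Cmp D (\<epsilon> Y) (FM (GM f))) (FM (\<eta> X))" if f: "f \<in> hom D (FO X) Y" for f Y
  proof -
    have "f = Cmp D f (Cmp D (\<epsilon> (FO X)) (FM (\<eta> X)))" using triangle comp_id_right[OF D f] by simp
    also have "\<dots> = Cmp D (Cmp D f (\<epsilon> (FO X))) (FM (\<eta> X))"
      using comp_assoc[OF D F\<eta> \<epsilon>[OF FX] f] .
    finally show ?thesis using \<epsilon>_nat[OF f] by simp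
  qed
  show ?thesis
    unfolding rel_projective_def inj_on_def using adjunct by metis
qed

lemma rel_injective_right_adjoint_obj:
  assumes adj: "adjunction C D FO FM GO GM" and C: "category C" and D: "category D"
    and Y: "Y \<in> Obj D"
  shows "rel_injective C FM (GO Y)"
proof -
  obtain \<eta> \<epsilon> where \<eta>: "\<And>X. X \<in> Obj C \<Longrightarrow> \<eta> X \<in> hom C X (GO (FO X))"
    and \<eta>_nat: "\<And>f X Y. f \<in> hom C X Y \<Longrightarrow> Cmp C (\<eta> Y) f = Cmp C (GM (FM f)) (\<eta> X)"
    and \<epsilon>: "\<epsilon> Y \<in> hom D (FO (GO Y)) Y"
    and triangle: "Cmp C (GM (\<epsilon> Y)) (\<eta> (GO Y)) = Idn C (GO Y)"
    using adjunctionE[OF adj] Y by metis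
  have G: "functor D C GO GM" using adj unfolding adjunction_def by simp
  have G\<epsilon>: "GM (\<epsilon> Y) \<in> hom C (GO (FO (GO Y))) (GO Y)" using functor_hom[OF G \<epsilon>] .
  have GY: "GO Y \<in> Obj C" using functor_obj[OF G Y] .
  have adjunct: "f = Cmp C (GM (\<epsilon> Y)) (Cmp C (GM (FM f)) (\<eta> X))" if f: "f \<in> hom C X (GO Y)" for f X
  proof -
    have "f = Cmp C (Cmp C (GM (\<epsilon> Y)) (\<eta> (GO Y))) f" using triangle comp_id_left[OF C f] by simp
    also have "\<dots> = Cmp C (GM (\<epsilon> Y)) (Cmp C (\<eta> (GO Y)) f)"
      using comp_assoc[OF C f \<eta>[OF GY] G\<epsilon>] by simp
    finally show ?thesis using \<eta>_nat[OF f] by simp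
  qed
  show ?thesis
    unfolding rel_injective_def inj_on_def using adjunct by metis
qed

lemma rel_projective_retract:
  assumes C: "category C" and F: "functor C D FO FM"
    and s: "s \<in> hom C Q P" and r: "r \<in> hom C P Q" and rs: "Cmp C r s = Idn C Q"
    and P: "rel_projective C FM P"
  shows "rel_projective C FM Q"
  unfolding rel_projective_def inj_on_def
proof (intro ballI impI)
  fix X f g assume X: "X \<in> Obj C" and f: "f \<in> hom C Q X" and g: "g \<in> hom C Q X"
    and fg: "FM f = FM g"
  have "FM (Cmp C f r) = FM (Cmp C g r)" using functor_comp[OF F r] f g fg by simp
  then have fr: "Cmp C f r = Cmp C g r"
    using P X comp_hom[OF C r] f g unfolding rel_projective_def inj_on_def by blast
  have "f = Cmp C (Cmp C f r) s" using comp_assoc[OF C s r f] rs comp_id_right[OF C f] by simp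
  also have "\<dots> = g" using fr comp_assoc[OF C s r g] rs comp_id_right[OF C g] by simp
  finally show "f = g" .
qed

lemma rel_injective_retract:
  assumes C: "category C" and F: "functor C D FO FM"
    and s: "s \<in> hom C Q P" and r: "r \<in> hom C P Q" and rs: "Cmp C r s = Idn C Q"
    and P: "rel_injective C FM P"
  shows "rel_injective C FM Q"
  unfolding rel_injective_def inj_on_def
proof (intro ballI impI)
  fix X f g assume X: "X \<in> Obj C" and f: "f \<in> hom C X Q" and g: "g \<in> hom C X Q"
    and fg: "FM f = FM g"
  have "FM (Cmp C s f) = FM (Cmp C s g)" using functor_comp[OF F _ s] f g fg by simp
  then have sf: "Cmp C s f = Cmp C s g"
    using P X comp_hom[OF C _ s] f g unfolding rel_injective_def inj_on_def by blast
  have "f = Cmp C r (Cmp C s f)" using comp_assoc[OF C f s r] rs comp_id_left[OF C f] by simp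
  also have "\<dots> = g" using sf comp_assoc[OF C g s r] rs comp_id_left[OF C g] by simp
  finally show "f = g" .
qed

lemma rel_projective_biprod:
  assumes C: "preadditive C" and F: "functor C D FO FM"
    and bp: "is_biprod C Xs P ins prs" and summands: "\<forall>X\<in>set Xs. rel_projective C FM X"
  shows "rel_projective C FM P"
  unfolding rel_projective_def inj_on_def
proof (intro ballI impI)
  fix Y f g assume Y: "Y \<in> Obj C" and f: "f \<in> hom C P Y" and g: "g \<in> hom C P Y"
    and fg: "FM f = FM g"
  have "Cmp C f (ins ! i) = Cmp C g (ins ! i)" if i: "i < length Xs" for i
  proof -
    have ins: "ins ! i \<in> hom C (Xs ! i) P" using bp i unfolding is_biprod_def by simp
    have "FM (Cmp C f (ins ! i)) = FM (Cmp C g (ins ! i))"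
      using functor_comp[OF F ins] f g fg by simp
    moreover have "rel_projective C FM (Xs ! i)" using summands i by simp
    ultimately show ?thesis
      using Y comp_hom[OF preadditive_category[OF C] ins] f g
      unfolding rel_projective_def inj_on_def by blast
  qed
  then show "f = g" using biprod_ext_right[OF C bp f g] by blast
qed

lemma rel_injective_biprod:
  assumes C: "preadditive C" and F: "functor C D FO FM"
    and bp: "is_biprod C Xs P ins prs" and summands: "\<forall>X\<in>set Xs. rel_injective C FM X"
  shows "rel_injective C FM P"
  unfolding rel_injective_def inj_on_def
proof (intro ballI impI)
  fix Y f g assume Y: "Y \<in> Obj C" and f: "f \<in> hom C Y P" and g: "g \<in> hom C Y P"
    and fg: "FM f = FM g"
  have "Cmp C (prs ! i) f = Cmp C (prs ! i) g" if i: "i < length Xs" for i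
  proof -
    have prs: "prs ! i \<in> hom C P (Xs ! i)" using bp i unfolding is_biprod_def by simp
    have "FM (Cmp C (prs ! i) f) = FM (Cmp C (prs ! i) g)"
      using functor_comp[OF F _ prs] f g fg by simp
    moreover have "rel_injective C FM (Xs ! i)" using summands i by simp
    ultimately show ?thesis
      using Y comp_hom[OF preadditive_category[OF C] _ prs] f g
      unfolding rel_injective_def inj_on_def by blast
  qed
  then show "f = g" using biprod_ext_left[OF C bp f g] by blast
qed

lemma rel_projective_if_in_add_im:
  assumes C: "preadditive C" and F: "functor C D FO FM"
    and im: "\<And>L. L \<in> Obj E \<Longrightarrow> rel_projective C FM (SO L)" and Q: "in_add_im C E SO Q"
  shows "rel_projective C FM Q"
proof -
  obtain Ls P ins prs s r where "set Ls \<subseteq> Obj E" and bp: "is_biprod C (map SO Ls) P ins prs"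
    and "s \<in> hom C Q P" "r \<in> hom C P Q" "Cmp C r s = Idn C Q"
    using Q unfolding in_add_im_def by blast
  moreover from \<open>set Ls \<subseteq> Obj E\<close> have "rel_projective C FM P"
    using rel_projective_biprod[OF C F bp] im by auto
  ultimately show ?thesis using rel_projective_retract[OF preadditive_category[OF C] F] by blast
qed

lemma rel_injective_if_in_add_im:
  assumes C: "preadditive C" and F: "functor C D FO FM"
    and im: "\<And>L. L \<in> Obj E \<Longrightarrow> rel_injective C FM (SO L)" and Q: "in_add_im C E SO Q"
  shows "rel_injective C FM Q"
proof -
  obtain Ls P ins prs s r where "set Ls \<subseteq> Obj E" and bp: "is_biprod C (map SO Ls) P ins prs"
    and "s \<in> hom C Q P" "r \<in> hom C P Q" "Cmp C r s = Idn C Q"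
    using Q unfolding in_add_im_def by blast
  moreover from \<open>set Ls \<subseteq> Obj E\<close> have "rel_injective C FM P"
    using rel_injective_biprod[OF C F bp] im by auto
  ultimately show ?thesis using rel_injective_retract[OF preadditive_category[OF C] F] by blast
qed

lemma in_add_im_retract:
  assumes C: "preadditive C" and L: "L \<in> Obj E" and SL: "SO L \<in> Obj C"
    and "s \<in> hom C Q (SO L)" and "r \<in> hom C (SO L) Q" and "Cmp C r s = Idn C Q"
  shows "in_add_im C E SO Q"
  unfolding in_add_im_def
  using singleton_biprod[OF C SL] L assms(4-6)
  by (intro exI[of _ "[L]"]) auto

lemma rel_projective_split_epi:
  assumes C: "triangulated C" and D: "preadditive D" and F: "additive_functor C D FO FM"
    and e: "e \<in> hom C M Q" and e': "e' \<in> hom D (FO Q) (FO M)"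
    and Fe_split: "Cmp D (FM e) e' = Idn D (FO Q)"
    and Q: "rel_projective C FM Q"
  shows "\<exists>s\<in>hom C Q M. Cmp C e s = Idn C Q"
proof -
  have pa: "preadditive C" and cat: "category C"
    by (rule triangulated_preadditive[OF C], rule triangulated_category[OF C])
  have FF: "functor C D FO FM" using additive_functor_functor[OF F pa D] .
  have "e \<in> Arr C" using e by (simp add: hom_def)
  then obtain v w where d: "(e, v, w) \<in> Dist C" using dist_completion[OF C] by blast
  let ?Z = "Cod C v"
  have v: "v \<in> hom C Q ?Z" using dist_homs(2)[OF C d] e by (simp add: hom_def)
  have M: "M \<in> Obj C" and QO: "Q \<in> Obj C" and Z: "?Z \<in> Obj C"
    using hom_objs[OF cat e] hom_objs[OF cat v] by simp_all
  have Fe: "FM e \<in> hom D (FO M) (FO Q)" and Fv: "FM v \<in> hom D (FO Q) (FO ?Z)"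
    using functor_hom[OF FF] e v by simp_all
  have "FM v = Cmp D (FM v) (Cmp D (FM e) e')"
    using Fe_split comp_id_right[OF preadditive_category[OF D] Fv] by simp
  also have "\<dots> = Cmp D (FM (Cmp C v e)) e'"
    using comp_assoc[OF preadditive_category[OF D] e' Fe Fv] functor_comp[OF FF e v] by simp
  also have "\<dots> = FM (Zro C Q ?Z)"
    using dist_comp_zero[OF C d e v] additive_functor_zro[OF F pa D] M QO Z
      comp_zro_left[OF D e'] functor_obj[OF FF] by simp
  finally have "v = Zro C Q ?Z"
    using Q Z v zro_hom[OF pa QO Z] unfolding rel_projective_def inj_on_def by blast
  then have "Cmp C v (Idn C Q) = Zro C Q ?Z" using comp_id_right[OF cat v] by simp
  then show ?thesis using dist_exact[OF C d e v id_hom[OF cat QO]] by blast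
qed

lemma rel_injective_split_mono:
  assumes C: "triangulated C" and D: "preadditive D" and F: "additive_functor C D FO FM"
    and m: "m \<in> hom C Q M" and m': "m' \<in> hom D (FO M) (FO Q)"
    and Fm_split: "Cmp D m' (FM m) = Idn D (FO Q)"
    and Q: "rel_injective C FM Q"
  shows "\<exists>r\<in>hom C M Q. Cmp C r m = Idn C Q"
proof -
  have pa: "preadditive C" and cat: "category C"
    by (rule triangulated_preadditive[OF C], rule triangulated_category[OF C])
  have FF: "functor C D FO FM" using additive_functor_functor[OF F pa D] .
  have "m \<in> Arr C" using m by (simp add: hom_def)
  then obtain u w where d: "(u, m, w) \<in> Dist C" using dist_completion_middle[OF C] by blast
  let ?V = "Dom C u"
  have u: "u \<in> hom C ?V Q" using dist_homs(1,2)[OF C d] m by (simp add: hom_def)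
  have V: "?V \<in> Obj C" and QO: "Q \<in> Obj C" and M: "M \<in> Obj C"
    using hom_objs[OF cat u] hom_objs[OF cat m] by simp_all
  have Fm: "FM m \<in> hom D (FO Q) (FO M)" and Fu: "FM u \<in> hom D (FO ?V) (FO Q)"
    using functor_hom[OF FF] m u by simp_all
  have "FM u = Cmp D (Cmp D m' (FM m)) (FM u)"
    using Fm_split comp_id_left[OF preadditive_category[OF D] Fu] by simp
  also have "\<dots> = Cmp D m' (FM (Cmp C m u))"
    using comp_assoc[OF preadditive_category[OF D] Fu Fm m'] functor_comp[OF FF u m] by simp
  also have "\<dots> = FM (Zro C ?V Q)"
    using dist_comp_zero[OF C d u m] additive_functor_zro[OF F pa D] M QO V
      comp_zro_right[OF D m'] functor_obj[OF FF] by simp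
  finally have "u = Zro C ?V Q"
    using Q V u zro_hom[OF pa V QO] unfolding rel_injective_def inj_on_def by blast
  then have "Cmp C (Idn C Q) u = Zro C ?V Q" using comp_id_left[OF cat u] by simp
  then show ?thesis using dist_coexact[OF C d u m id_hom[OF cat QO]] by blast
qed

lemma rel_projective_iff_in_add_im:
  assumes S: "triangulated S" and T: "preadditive T" and F: "additive_functor S T TO TM"
    and adj: "adjunction T S SO SM TO TM" and Q: "Q \<in> Obj S"
  shows "rel_projective S TM Q \<longleftrightarrow> in_add_im S T SO Q"
proof
  have pa: "preadditive S" using triangulated_preadditive[OF S] .
  have FT: "functor S T TO TM" and FS: "functor T S SO SM" using adj unfolding adjunction_def
    by simp_all
  obtain \<eta> \<epsilon> where \<eta>: "\<eta> (TO Q) \<in> hom T (TO Q) (TO (SO (TO Q)))"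
    and \<epsilon>: "\<epsilon> Q \<in> hom S (SO (TO Q)) Q"
    and triangle: "Cmp T (TM (\<epsilon> Q)) (\<eta> (TO Q)) = Idn T (TO Q)"
    using adjunctionE[OF adj] functor_obj[OF FT Q] Q by metis
  assume "rel_projective S TM Q"
  then obtain s where "s \<in> hom S Q (SO (TO Q))" and "Cmp S (\<epsilon> Q) s = Idn S Q"
    using rel_projective_split_epi[OF S T F \<epsilon> \<eta> triangle] by blast
  then show "in_add_im S T SO Q"
    using in_add_im_retract[where SO = SO and L = "TO Q", OF pa functor_obj[OF FT Q]
        functor_obj[OF FS functor_obj[OF FT Q]]] \<epsilon> by blast
next
  assume "in_add_im S T SO Q"
  then show "rel_projective S TM Q"
    using rel_projective_if_in_add_im[OF triangulated_preadditive[OF S]]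
      rel_projective_left_adjoint_obj[OF adj preadditive_category[OF T] triangulated_category[OF S]]
      adj unfolding adjunction_def by blast
qed

lemma rel_injective_iff_in_add_im:
  assumes S: "triangulated S" and T: "preadditive T" and F: "additive_functor S T TO TM"
    and adj: "adjunction S T TO TM SO SM" and Q: "Q \<in> Obj S"
  shows "rel_injective S TM Q \<longleftrightarrow> in_add_im S T SO Q"
proof
  have pa: "preadditive S" using triangulated_preadditive[OF S] .
  have FT: "functor S T TO TM" and FS: "functor T S SO SM" using adj unfolding adjunction_def
    by simp_all
  obtain \<eta> \<epsilon> where \<eta>: "\<eta> Q \<in> hom S Q (SO (TO Q))"
    and \<epsilon>: "\<epsilon> (TO Q) \<in> hom T (TO (SO (TO Q))) (TO Q)"
    and triangle: "Cmp T (\<epsilon> (TO Q)) (TM (\<eta> Q)) = Idn T (TO Q)"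
    using adjunctionE[OF adj] functor_obj[OF FT Q] Q by metis
  assume "rel_injective S TM Q"
  then obtain r where "r \<in> hom S (SO (TO Q)) Q" and "Cmp S r (\<eta> Q) = Idn S Q"
    using rel_injective_split_mono[OF S T F \<eta> \<epsilon> triangle] by blast
  then show "in_add_im S T SO Q"
    using in_add_im_retract[where SO = SO and L = "TO Q", OF pa functor_obj[OF FT Q]
        functor_obj[OF FS functor_obj[OF FT Q]]] \<eta> by blast
next
  assume "in_add_im S T SO Q"
  then show "rel_injective S TM Q"
    using rel_injective_if_in_add_im[OF triangulated_preadditive[OF S]]
      rel_injective_right_adjoint_obj[OF adj triangulated_category[OF S] preadditive_category[OF T]]
      adj unfolding adjunction_def by blast
qed

theorem proposition2p8:
  fixes \<S> :: "('a, 'b) tricat" and \<T> :: "('c, 'd) tricat"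
    and TO :: "'a \<Rightarrow> 'c" and TM :: "'b \<Rightarrow> 'd"
    and SO :: "'c \<Rightarrow> 'a" and SM :: "'d \<Rightarrow> 'b"
    and Q :: 'a
  assumes "triangulated \<S>" and "triangulated \<T>"
    and "triangle_functor \<S> \<T> TO TM"
    and "Q \<in> Obj \<S>"
  shows "(adjunction \<T> \<S> SO SM TO TM \<longrightarrow> (rel_projective \<S> TM Q \<longleftrightarrow> in_add_im \<S> \<T> SO Q)) \<and>
         (adjunction \<S> \<T> TO TM SO SM \<longrightarrow> (rel_injective \<S> TM Q \<longleftrightarrow> in_add_im \<S> \<T> SO Q))"
proof -
  have T: "preadditive \<T>" using triangulated_preadditive[OF assms(2)] .
  have F: "additive_functor \<S> \<T> TO TM" using assms(3) unfolding triangle_functor_def by simp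
  show ?thesis
    using rel_projective_iff_in_add_im[OF assms(1) T F] rel_injective_iff_in_add_im[OF assms(1) T F]
      assms(4) by blast
qed

end
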